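(* Let $G$ be a finite abelian group and consider any $(k,l)$ fractional network code over $G$ that is a solution of the sum-network $\mathcal{S}_3'$. Then the map $(X_1,X_2,X_3)\mapsto$ (the pair of vectors carried on the edges $(u_1,v_1)$ and $(u_2,v_2)$) is injective on $G^k\times G^k\times G^k$; equivalently, terminal $t_3$ can recover each of $X_1,X_2,X_3$ individually. Consequently $|G|^{2l}\ge |G|^{3k}$.
   Context: The sum-network $\mathcal{S}_3'$ has sources $s_1,s_2,s_3$, terminals $t_1,t_2,t_3$, intermediate nodes $u_1,v_1,u_2,v_2,u_3$, and edges $(s_1,u_1),(s_3,u_1),(u_1,v_1),(v_1,t_1),(v_1,t_3),(s_2,u_2),(s_3,u_2),(u_2,v_2),(v_2,t_2),(v_2,t_3),(s_1,t_2),(s_1,t_1),(s_2,u_3),(s_1,u_3),(u_3,t_1)$. A $(k,l)$ fractional network code over $G$: each source $s_i$ holds $X_i\in G^k$ and sends on each outgoing edge a function $G^k\to G^l$ of $X_i$; each edge whose tail $v$ is not a source carries a function $G^{l|In(v)|}\to G^l$ of the vectors on the incoming edges of $v$; each terminal applies a decoding function $G^{l|In(t)|}\to G^k$. It is a solution if every terminal outputs $X_1+X_2+X_3$ (componentwise sum in $G^k$) for all messages. *)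

theory Defs
  imports "HOL-Analysis.Finite_Cartesian_Product"
begin

text \<open>G^k is rendered as the type 'g^'k, G^l as 'g^'l (k = CARD('k), l = CARD('l)).
  One field per edge; a non-source edge out of a node v takes the vectors on the
  incoming edges of v (in a fixed order); terminals have decoding functions.\<close>

record ('g, 'k, 'l) S3code =
  e_s1u1 :: "'g^'k \<Rightarrow> 'g^'l"
  e_s3u1 :: "'g^'k \<Rightarrow> 'g^'l"
  e_s2u2 :: "'g^'k \<Rightarrow> 'g^'l"
  e_s3u2 :: "'g^'k \<Rightarrow> 'g^'l"
  e_s1t2 :: "'g^'k \<Rightarrow> 'g^'l"
  e_s1t1 :: "'g^'k \<Rightarrow> 'g^'l"
  e_s2u3 :: "'g^'k \<Rightarrow> 'g^'l"
  e_s1u3 :: "'g^'k \<Rightarrow> 'g^'l"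
  e_u1v1 :: "'g^'l \<Rightarrow> 'g^'l \<Rightarrow> 'g^'l"
  e_v1t1 :: "'g^'l \<Rightarrow> 'g^'l"
  e_v1t3 :: "'g^'l \<Rightarrow> 'g^'l"
  e_u2v2 :: "'g^'l \<Rightarrow> 'g^'l \<Rightarrow> 'g^'l"
  e_v2t2 :: "'g^'l \<Rightarrow> 'g^'l"
  e_v2t3 :: "'g^'l \<Rightarrow> 'g^'l"
  e_u3t1 :: "'g^'l \<Rightarrow> 'g^'l \<Rightarrow> 'g^'l"
  dec_t1 :: "'g^'l \<Rightarrow> 'g^'l \<Rightarrow> 'g^'l \<Rightarrow> 'g^'k"
  dec_t2 :: "'g^'l \<Rightarrow> 'g^'l \<Rightarrow> 'g^'k"
  dec_t3 :: "'g^'l \<Rightarrow> 'g^'l \<Rightarrow> 'g^'k"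

definition val_u1v1 :: "('g, 'k::finite, 'l::finite) S3code \<Rightarrow> 'g^'k \<Rightarrow> 'g^'k \<Rightarrow> 'g^'k \<Rightarrow> 'g^'l" where
  "val_u1v1 C X1 X2 X3 = e_u1v1 C (e_s1u1 C X1) (e_s3u1 C X3)"

definition val_u2v2 :: "('g, 'k::finite, 'l::finite) S3code \<Rightarrow> 'g^'k \<Rightarrow> 'g^'k \<Rightarrow> 'g^'k \<Rightarrow> 'g^'l" where
  "val_u2v2 C X1 X2 X3 = e_u2v2 C (e_s2u2 C X2) (e_s3u2 C X3)"

definition val_u3t1 :: "('g, 'k::finite, 'l::finite) S3code \<Rightarrow> 'g^'k \<Rightarrow> 'g^'k \<Rightarrow> 'g^'k \<Rightarrow> 'g^'l" where
  "val_u3t1 C X1 X2 X3 = e_u3t1 C (e_s2u3 C X2) (e_s1u3 C X1)"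

definition out_t1 :: "('g, 'k::finite, 'l::finite) S3code \<Rightarrow> 'g^'k \<Rightarrow> 'g^'k \<Rightarrow> 'g^'k \<Rightarrow> 'g^'k" where
  "out_t1 C X1 X2 X3 = dec_t1 C (e_v1t1 C (val_u1v1 C X1 X2 X3)) (e_s1t1 C X1) (val_u3t1 C X1 X2 X3)"

definition out_t2 :: "('g, 'k::finite, 'l::finite) S3code \<Rightarrow> 'g^'k \<Rightarrow> 'g^'k \<Rightarrow> 'g^'k \<Rightarrow> 'g^'k" where
  "out_t2 C X1 X2 X3 = dec_t2 C (e_v2t2 C (val_u2v2 C X1 X2 X3)) (e_s1t2 C X1)"

definition out_t3 :: "('g, 'k::finite, 'l::finite) S3code \<Rightarrow> 'g^'k \<Rightarrow> 'g^'k \<Rightarrow> 'g^'k \<Rightarrow> 'g^'k" where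
  "out_t3 C X1 X2 X3 = dec_t3 C (e_v1t3 C (val_u1v1 C X1 X2 X3)) (e_v2t3 C (val_u2v2 C X1 X2 X3))"

definition is_S3_solution :: "('g::ab_group_add, 'k::finite, 'l::finite) S3code \<Rightarrow> bool" where
  "is_S3_solution C \<longleftrightarrow>
     (\<forall>X1 X2 X3. out_t1 C X1 X2 X3 = X1 + X2 + X3
               \<and> out_t2 C X1 X2 X3 = X1 + X2 + X3
               \<and> out_t3 C X1 X2 X3 = X1 + X2 + X3)"

end

theory Submission
  imports Defs
begin

(* Terminal t3 sees only the two edges (u1,v1) and (u2,v2); we show that these two
   vectors already determine all three messages:
   - t3 decodes X1 + X2 + X3 from them;
   - the edge (u2,v2) does not depend on X1, and t2 decodes X1 + X2 + X3 from it
     together with X1, so (u2,v2) determines X2 + X3;  hence X1 is determined;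
   - the edge (u1,v1) does not depend on X2, and t1 decodes the sum from it together
     with data depending only on X1 and X2, so once X1 is known, (u1,v1) determines X3;
   - then X2 follows from X2 + X3.
   The resulting injection of G^k x G^k x G^k into G^l x G^l gives the counting bound
   |G|^(2l) >= |G|^(3k). *)

lemma S3_solution_outputs:
  assumes "is_S3_solution C"
  shows "out_t1 C X1 X2 X3 = X1 + X2 + X3"
    and "out_t2 C X1 X2 X3 = X1 + X2 + X3"
    and "out_t3 C X1 X2 X3 = X1 + X2 + X3"
  using assms unfolding is_S3_solution_def by blast+

text \<open>Given X1, the vector on (u1,v1) determines X3: terminal t1 combines it with
  X1 and the (u3,t1) vector, which depends on X1 and X2 only; the edge (u1,v1) itself
  does not depend on X2, so X2 may be chosen equal on both sides.\<close>

lemma u1v1_determines_X3: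
  assumes "is_S3_solution C"
    and "val_u1v1 C X1 X2 X3 = val_u1v1 C X1 X2' X3'"
  shows "X3 = X3'"
proof -
  have "val_u1v1 C X1 X2 X3' = val_u1v1 C X1 X2' X3'"
    unfolding val_u1v1_def ..
  with assms(2) have "out_t1 C X1 X2 X3 = out_t1 C X1 X2 X3'"
    unfolding out_t1_def val_u3t1_def by simp
  then show ?thesis
    using S3_solution_outputs(1)[OF assms(1)] by simp
qed

text \<open>The vector on (u2,v2) determines X2 + X3: it does not depend on X1, and
  terminal t2 combines it with X1 to obtain X1 + X2 + X3.\<close>

lemma u2v2_determines_X2_plus_X3:
  assumes "is_S3_solution C"
    and "val_u2v2 C X1 X2 X3 = val_u2v2 C X1' X2' X3'"
  shows "X2 + X3 = X2' + X3'"
proof -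
  have "val_u2v2 C X1 X2' X3' = val_u2v2 C X1' X2' X3'"
    unfolding val_u2v2_def ..
  with assms(2) have "out_t2 C X1 X2 X3 = out_t2 C X1 X2' X3'"
    unfolding out_t2_def by simp
  then have "X1 + (X2 + X3) = X1 + (X2' + X3')"
    using S3_solution_outputs(2)[OF assms(1)] by (simp add: add.assoc)
  then show ?thesis by simp
qed

text \<open>The pair of vectors on (u1,v1) and (u2,v2) determines X1 + X2 + X3,
  since this is all that terminal t3 receives.\<close>

lemma cut_determines_sum:
  assumes "is_S3_solution C"
    and "val_u1v1 C X1 X2 X3 = val_u1v1 C X1' X2' X3'"
    and "val_u2v2 C X1 X2 X3 = val_u2v2 C X1' X2' X3'"
  shows "X1 + X2 + X3 = X1' + X2' + X3'"
proof -
  have "out_t3 C X1 X2 X3 = out_t3 C X1' X2' X3'"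
    using assms(2,3) unfolding out_t3_def by simp
  then show ?thesis
    using S3_solution_outputs(3)[OF assms(1)] by simp
qed

lemma cut_injective:
  assumes "is_S3_solution C"
  shows "inj (\<lambda>(X1, X2, X3). (val_u1v1 C X1 X2 X3, val_u2v2 C X1 X2 X3))"
proof (rule injI, clarsimp)
  fix X1 X2 X3 X1' X2' X3'
  assume u1v1: "val_u1v1 C X1 X2 X3 = val_u1v1 C X1' X2' X3'"
    and u2v2: "val_u2v2 C X1 X2 X3 = val_u2v2 C X1' X2' X3'"
  have sum: "X1 + (X2 + X3) = X1' + (X2' + X3')"
    using cut_determines_sum[OF assms u1v1 u2v2] by (simp add: add.assoc)
  have partial: "X2 + X3 = X2' + X3'"
    using u2v2_determines_X2_plus_X3[OF assms u2v2] .
  from sum partial have X1: "X1 = X1'" by simp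
  have X3: "X3 = X3'"
    using u1v1_determines_X3[OF assms] u1v1 X1 by simp
  from partial X3 have "X2 = X2'" by simp
  with X1 X3 show "X1 = X1' \<and> X2 = X2' \<and> X3 = X3'" by simp
qed

lemma card_bound_of_inj:
  fixes f :: "('a::finite^'k::finite) \<times> ('a^'k) \<times> ('a^'k) \<Rightarrow> ('a^'l::finite) \<times> ('a^'l)"
  assumes "inj f"
  shows "CARD('a) ^ (3 * CARD('k)) \<le> CARD('a) ^ (2 * CARD('l))"
proof -
  have "CARD(('a^'k) \<times> ('a^'k) \<times> ('a^'k)) \<le> CARD(('a^'l) \<times> ('a^'l))"
    using card_inj_on_le[OF assms subset_UNIV finite] .
  moreover have "CARD(('a^'k) \<times> ('a^'k) \<times> ('a^'k)) = CARD('a) ^ (3 * CARD('k))"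
    by (simp add: CARD_vec power_mult numeral_3_eq_3 power_add[symmetric])
  moreover have "CARD(('a^'l) \<times> ('a^'l)) = CARD('a) ^ (2 * CARD('l))"
    by (simp add: CARD_vec mult_2 power_add)
  ultimately show ?thesis by simp
qed

theorem mainTheorem6:
  fixes C :: "('g::{ab_group_add, finite}, 'k::finite, 'l::finite) S3code"
  assumes "is_S3_solution C"
  shows "inj (\<lambda>(X1, X2, X3). (val_u1v1 C X1 X2 X3, val_u2v2 C X1 X2 X3))
         \<and> CARD('g) ^ (2 * CARD('l)) \<ge> CARD('g) ^ (3 * CARD('k))"
proof
  show inj: "inj (\<lambda>(X1, X2, X3). (val_u1v1 C X1 X2 X3, val_u2v2 C X1 X2 X3))"
    using cut_injective[OF assms] .
  show "CARD('g) ^ (2 * CARD('l)) \<ge> CARD('g) ^ (3 * CARD('k))"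
    using card_bound_of_inj[OF inj] .
qed

end
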